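(* (Forbid trumps permit.) For every entity store $\mu$, every finite set of policies $C$, and every request $\sigma$: if there exists a policy $c \in C$ with effect $\mathtt{forbid}$ such that $\mathrm{toexp}(c)$ evaluates to $\mathtt{true}$ under $\mu,\sigma$, then $\mathrm{authorize}(\mu, C, \sigma) = \mathit{Deny}$.
   Context: Entity references have the form $E::s$ with $E$ an entity type name and $s$ a string. An entity store $\mu$ is a finite partial map from entity references to pairs $(r,h)$, where $r$ is a record value (the attributes) and $h$ is a finite set of entity references (the ancestors). For an entity reference $u$, let $h_\mu(u)$ be the second component of $\mu(u)$ if $u \in \mathrm{dom}(\mu)$, and $\emptyset$ otherwise. A request $\sigma$ maps the variables $\mathtt{principal}$, $\mathtt{action}$, $\mathtt{resource}$ to entity references and $\mathtt{context}$ to a record value. Expressions are evaluated by a deterministic call-by-value, left-to-right semantics that may also get stuck (raise an error); we say $e$ evaluates to $v$ under $\mu,\sigma$ if evaluation terminates with value $v$. This semantics satisfies: the literal $\mathtt{true}$ evaluates to $\mathtt{true}$; $e_1 \,\&\&\, e_2$ evaluates to $\mathtt{true}$ iff $e_1$ evaluates to $\mathtt{true}$ and $e_2$ evaluates to $\mathtt{true}$; for $x \in \{\mathtt{principal},\mathtt{resource}\}$ and entity reference $u$, the expression $x == u$ evaluates to $\mathtt{true}$ iff $\sigma(x) = u$, and $x\ \mathtt{in}\ u$ evaluates to $\mathtt{true}$ iff $\sigma(x) = u$ or $u \in h_\mu(\sigma(x))$. A policy $c$ consists of an effect ($\mathtt{permit}$ or $\mathtt{forbid}$); a principal scope, which is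 either unconstrained or one of $\mathtt{principal} == u$, $\mathtt{principal}\ \mathtt{in}\ u$; an action scope (unconstrained, $\mathtt{action} == u$, $\mathtt{action}\ \mathtt{in}\ u$, or $\mathtt{action}\ \mathtt{in}\ [u_1,\dots,u_n]$); a resource scope, either unconstrained or one of $\mathtt{resource} == u$, $\mathtt{resource}\ \mathtt{in}\ u$; and a finite list of conditions $\mathtt{when}\{e\}$ or $\mathtt{unless}\{e\}$. The expression $\mathrm{toexp}(c)$ is the $\&\&$-conjunction of the principal scope, action scope, resource scope (each replaced by $\mathtt{true}$ if unconstrained), and the conditions ($\mathtt{when}\{e\}$ contributes $e$, $\mathtt{unless}\{e\}$ contributes $!e$). Let $\mathrm{pof}(c)$ be the entity reference $u$ named in the principal scope of $c$, or a special symbol $\mathtt{Any}$ if unconstrained; define $\mathrm{rof}(c)$ likewise for the resource scope. With $P = \sigma(\mathtt{principal})$, $R = \sigma(\mathtt{resource})$, let $K = (h_\mu(P) \cup \{P, \mathtt{Any}\}) \times (h_\mu(R) \cup \{R, \mathtt{Any}\})$ and $\mathrm{slice}(C,\sigma) = \{ c \in C : (\mathrm{pof}(c), \mathrm{rof}(c)) \in K\}$. Define $C_S = \{ c \in \mathrm{slice}(C,\sigma) : \mathrm{toexp}(c) \text{ evaluates to } \mathtt{true} \text{ under } \mu,\sigma\}$, and $\mathrm{authorize}(\mu,C,\sigma) = \mathit{Allow}$ if $C_S$ contains no $\mathtt{forbid}$ policy and at least one $\mathtt{permit}$ policy, and $\mathit{Deny}$ otherwise. *)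

theory Defs
  imports Main
begin

datatype euid = EUID (etype: string) (eid: string)

datatype val = VBool bool | VLong int | VStr string | VEntity euid
  | VSet "val list" | VRecord "(string \<times> val) list"

datatype var = Principal | Action | Resource | Context

datatype binop = OpEq | OpIn | OpLess | OpLessEq | OpAdd | OpSub | OpMul | OpContains
  | OpContainsAll | OpContainsAny

datatype expr =
    Lit val
  | Var var
  | And expr expr
  | Or expr expr
  | Not expr
  | Neg expr
  | IfThenElse expr expr expr
  | BinApp binop expr expr
  | GetAttr expr string
  | HasAttr expr string
  | Like expr string
  | Is expr string
  | SetE "expr list"
  | RecordE "(string \<times> expr) list"
  | ExtCall string "expr list"

text \<open>Entity store: finite partial map from entity references to (attributes, ancestors).\<close>
type_synonym store = "euid \<Rightarrow> (val \<times> euid set) option"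

definition wf_store :: "store \<Rightarrow> bool" where
  "wf_store \<mu> \<longleftrightarrow> finite (dom \<mu>) \<and>
     (\<forall>u r h. \<mu> u = Some (r, h) \<longrightarrow> finite h \<and> (\<exists>fs. r = VRecord fs))"

record request =
  principal :: euid
  action :: euid
  resource :: euid
  ctx :: val

definition wf_request :: "request \<Rightarrow> bool" where
  "wf_request \<sigma> \<longleftrightarrow> (\<exists>fs. ctx \<sigma> = VRecord fs)"

definition anc :: "store \<Rightarrow> euid \<Rightarrow> euid set" where
  "anc \<mu> u = (case \<mu> u of Some (r, h) \<Rightarrow> h | None \<Rightarrow> {})"

datatype effect = Permit | Forbid

datatype pscope = PAny | PEq euid | PIn euid
datatype ascope = AAny | AEq euid | AIn euid | AInList "euid list"
datatype rscope = RAny | REq euid | RIn euid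
datatype condition = When expr | Unless expr

record policy =
  eff :: effect
  pscp :: pscope
  ascp :: ascope
  rscp :: rscope
  conds :: "condition list"

fun pscope_exp :: "pscope \<Rightarrow> expr" where
  "pscope_exp PAny = Lit (VBool True)"
| "pscope_exp (PEq u) = BinApp OpEq (Var Principal) (Lit (VEntity u))"
| "pscope_exp (PIn u) = BinApp OpIn (Var Principal) (Lit (VEntity u))"

fun ascope_exp :: "ascope \<Rightarrow> expr" where
  "ascope_exp AAny = Lit (VBool True)"
| "ascope_exp (AEq u) = BinApp OpEq (Var Action) (Lit (VEntity u))"
| "ascope_exp (AIn u) = BinApp OpIn (Var Action) (Lit (VEntity u))"
| "ascope_exp (AInList us) = BinApp OpIn (Var Action) (SetE (map (\<lambda>u. Lit (VEntity u)) us))"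

fun rscope_exp :: "rscope \<Rightarrow> expr" where
  "rscope_exp RAny = Lit (VBool True)"
| "rscope_exp (REq u) = BinApp OpEq (Var Resource) (Lit (VEntity u))"
| "rscope_exp (RIn u) = BinApp OpIn (Var Resource) (Lit (VEntity u))"

fun cond_exp :: "condition \<Rightarrow> expr" where
  "cond_exp (When e) = e"
| "cond_exp (Unless e) = Not e"

fun conj :: "expr list \<Rightarrow> expr" where
  "conj [] = Lit (VBool True)"
| "conj [e] = e"
| "conj (e # es) = And e (conj es)"

definition toexp :: "policy \<Rightarrow> expr" where
  "toexp c = conj ([pscope_exp (pscp c), ascope_exp (ascp c), rscope_exp (rscp c)]
                    @ map cond_exp (conds c))"

datatype key = Any | Ent euid

fun pof :: "policy \<Rightarrow> key" where
  "pof c = (case pscp c of PAny \<Rightarrow> Any | PEq u \<Rightarrow> Ent u | PIn u \<Rightarrow> Ent u)"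

fun rof :: "policy \<Rightarrow> key" where
  "rof c = (case rscp c of RAny \<Rightarrow> Any | REq u \<Rightarrow> Ent u | RIn u \<Rightarrow> Ent u)"

definition slice :: "store \<Rightarrow> policy set \<Rightarrow> request \<Rightarrow> policy set" where
  "slice \<mu> C \<sigma> =
     (let P = principal \<sigma>; R = resource \<sigma>;
          K = (Ent ` (anc \<mu> P \<union> {P}) \<union> {Any}) \<times> (Ent ` (anc \<mu> R \<union> {R}) \<union> {Any})
      in {c \<in> C. (pof c, rof c) \<in> K})"

text \<open>The evaluation semantics is taken as a parameter: ev mu sigma e v means
  evaluation of e under mu, sigma terminates with value v.\<close>
type_synonym evaluator = "store \<Rightarrow> request \<Rightarrow> expr \<Rightarrow> val \<Rightarrow> bool"

definition good_semantics :: "evaluator \<Rightarrow> bool" where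
  "good_semantics ev \<longleftrightarrow>
    (\<forall>\<mu> \<sigma> e v v'. ev \<mu> \<sigma> e v \<longrightarrow> ev \<mu> \<sigma> e v' \<longrightarrow> v = v') \<and>
    (\<forall>\<mu> \<sigma>. ev \<mu> \<sigma> (Lit (VBool True)) (VBool True)) \<and>
    (\<forall>\<mu> \<sigma> e1 e2. ev \<mu> \<sigma> (And e1 e2) (VBool True) \<longleftrightarrow>
        ev \<mu> \<sigma> e1 (VBool True) \<and> ev \<mu> \<sigma> e2 (VBool True)) \<and>
    (\<forall>\<mu> \<sigma> u. ev \<mu> \<sigma> (BinApp OpEq (Var Principal) (Lit (VEntity u))) (VBool True)
        \<longleftrightarrow> principal \<sigma> = u) \<and>
    (\<forall>\<mu> \<sigma> u. ev \<mu> \<sigma> (BinApp OpEq (Var Resource) (Lit (VEntity u))) (VBool True)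
        \<longleftrightarrow> resource \<sigma> = u) \<and>
    (\<forall>\<mu> \<sigma> u. ev \<mu> \<sigma> (BinApp OpIn (Var Principal) (Lit (VEntity u))) (VBool True)
        \<longleftrightarrow> principal \<sigma> = u \<or> u \<in> anc \<mu> (principal \<sigma>)) \<and>
    (\<forall>\<mu> \<sigma> u. ev \<mu> \<sigma> (BinApp OpIn (Var Resource) (Lit (VEntity u))) (VBool True)
        \<longleftrightarrow> resource \<sigma> = u \<or> u \<in> anc \<mu> (resource \<sigma>))"

definition satisfied :: "evaluator \<Rightarrow> store \<Rightarrow> policy set \<Rightarrow> request \<Rightarrow> policy set" where
  "satisfied ev \<mu> C \<sigma> = {c \<in> slice \<mu> C \<sigma>. ev \<mu> \<sigma> (toexp c) (VBool True)}"

datatype decision = Allow | Deny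

definition authorize :: "evaluator \<Rightarrow> store \<Rightarrow> policy set \<Rightarrow> request \<Rightarrow> decision" where
  "authorize ev \<mu> C \<sigma> =
     (let CS = satisfied ev \<mu> C \<sigma> in
      if \<not> (\<exists>c\<in>CS. eff c = Forbid) \<and> (\<exists>c\<in>CS. eff c = Permit) then Allow else Deny)"

end

theory Submission
  imports Defs
begin

(* Slicing is sound: a policy whose principal and resource scopes hold names the principal
   (resource) itself or one of its ancestors, or is unconstrained, so it always survives the
   slice. Hence a satisfied forbid policy lies in C_S, which rules out Allow. *)

lemma conj_true_imp_member_true:
  assumes "good_semantics ev" "ev \<mu> \<sigma> (conj es) (VBool True)" "e \<in> set es"
  shows "ev \<mu> \<sigma> e (VBool True)"
  using assms(2,3)
proof (induction es rule: conj.induct)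
  case (3 e1 e2 es)
  then show ?case using assms(1) unfolding good_semantics_def by auto
qed auto

lemma toexp_true_imp_scopes_true:
  assumes "good_semantics ev" "ev \<mu> \<sigma> (toexp c) (VBool True)"
  shows "ev \<mu> \<sigma> (pscope_exp (pscp c)) (VBool True)"
    and "ev \<mu> \<sigma> (rscope_exp (rscp c)) (VBool True)"
  using conj_true_imp_member_true[OF assms(1) assms(2)[unfolded toexp_def]] by simp_all

lemma pof_mem_if_pscope_true:
  assumes "good_semantics ev" "ev \<mu> \<sigma> (pscope_exp (pscp c)) (VBool True)"
  shows "pof c \<in> Ent ` (anc \<mu> (principal \<sigma>) \<union> {principal \<sigma>}) \<union> {Any}"
  using assms unfolding good_semantics_def by (cases "pscp c") auto

lemma rof_mem_if_rscope_true:
  assumes "good_semantics ev" "ev \<mu> \<sigma> (rscope_exp (rscp c)) (VBool True)"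
  shows "rof c \<in> Ent ` (anc \<mu> (resource \<sigma>) \<union> {resource \<sigma>}) \<union> {Any}"
  using assms unfolding good_semantics_def by (cases "rscp c") auto

lemma satisfied_iff:
  assumes "good_semantics ev"
  shows "c \<in> satisfied ev \<mu> C \<sigma> \<longleftrightarrow> c \<in> C \<and> ev \<mu> \<sigma> (toexp c) (VBool True)"
  using toexp_true_imp_scopes_true[OF assms]
    pof_mem_if_pscope_true[OF assms] rof_mem_if_rscope_true[OF assms]
  unfolding satisfied_def slice_def Let_def by blast

lemma authorize_Deny_if_satisfied_Forbid:
  assumes "c \<in> satisfied ev \<mu> C \<sigma>" "eff c = Forbid"
  shows "authorize ev \<mu> C \<sigma> = Deny"
  using assms unfolding authorize_def Let_def by auto

theorem mainTheorem1:
  fixes ev :: evaluator and \<mu> :: store and C :: "policy set" and \<sigma> :: request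
  assumes "good_semantics ev"
    and "wf_store \<mu>" and "wf_request \<sigma>" and "finite C"
    and "\<exists>c\<in>C. eff c = Forbid \<and> ev \<mu> \<sigma> (toexp c) (VBool True)"
  shows "authorize ev \<mu> C \<sigma> = Deny"
proof -
  obtain c where "c \<in> C" "eff c = Forbid" "ev \<mu> \<sigma> (toexp c) (VBool True)"
    using assms(5) by blast
  then have "c \<in> satisfied ev \<mu> C \<sigma>"
    using satisfied_iff[OF assms(1)] by blast
  then show ?thesis
    using \<open>eff c = Forbid\<close> by (rule authorize_Deny_if_satisfied_Forbid)
qed

end
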